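(* Let $p\in(0,1/16)$. Then for any $m,n\in\mathbb N$ the set $$\Delta_{mn}(p)=\{q\in(0,1/16):\ S_1^m(A_{pq})\cap S_2^n(A_{pq})\neq\varnothing\}$$ is closed and nowhere dense in $(0,1/16)$.
   Context: For $p,q\in(0,1/2)$ let $S_1(x)=px$, $S_2(x)=qx$, $S_3(x)=px+1-p$, $S_4(x)=qx+1-q$, let $K_{pq}$ be the attractor of $\{S_1,S_2,S_3,S_4\}$ (the unique nonempty compact $K\subset\mathbb R$ with $K=\bigcup_{i=1}^4S_i(K)$), and let $A_{pq}=S_3(K_{pq})\cup S_4(K_{pq})$. In the definition of $\Delta_{mn}(p)$ the maps $S_2,S_3,S_4$ and the set $A_{pq}$ are those corresponding to the parameters $p,q$. *)

theory Defs
  imports "HOL-Analysis.Analysis"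
begin

definition S1 :: "real \<Rightarrow> real \<Rightarrow> real" where "S1 p x = p * x"
definition S2 :: "real \<Rightarrow> real \<Rightarrow> real" where "S2 q x = q * x"
definition S3 :: "real \<Rightarrow> real \<Rightarrow> real" where "S3 p x = p * x + 1 - p"
definition S4 :: "real \<Rightarrow> real \<Rightarrow> real" where "S4 q x = q * x + 1 - q"

definition attractor :: "real \<Rightarrow> real \<Rightarrow> real set" where
  "attractor p q = (THE K. compact K \<and> K \<noteq> {} \<and>
     K = S1 p ` K \<union> S2 q ` K \<union> S3 p ` K \<union> S4 q ` K)"

definition A_set :: "real \<Rightarrow> real \<Rightarrow> real set" where
  "A_set p q = S3 p ` attractor p q \<union> S4 q ` attractor p q"

definition Delta :: "nat \<Rightarrow> nat \<Rightarrow> real \<Rightarrow> real set" where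
  "Delta m n p = {q \<in> {0<..<1/16}.
      ((S1 p) ^^ m) ` A_set p q \<inter> ((S2 q) ^^ n) ` A_set p q \<noteq> {}}"

end

(*
  The four maps contract by a factor at most max p q, so the attractor exists, is unique, and is
  the closure of the orbit of 0; every point of it is within (max p q)^k of the image of 0 under
  a word of length k. Since words of length k depend 2-Lipschitz on q, the attractor moves
  continuously with q, and a compactness argument shows that Delta is closed.

  Suppose Delta contained an interval [alpha, beta] and put rho = max p beta < 1/16. Every q in it
  satisfies, for some pair of words w, w' of length k, the approximate equation
  p^m S_w(0) = q^n S_w'(0) up to 2 rho^k. Along a fixed pair the right-hand side grows in q at
  rate about alpha^(n-1), while both sides vary only 2-Lipschitz, so each pair is realised on a
  set of diameter O(rho^k / alpha^(n-1)). The 16^k pairs then cover [alpha, beta] by sets of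
  total length O((16 rho)^k), which is impossible for large k.
*)

theory Submission
  imports Defs
begin

section \<open>The iterated function system\<close>

(* Index i = 0, 1, 2, 3 stands for S1 p, S2 q, S3 p, S4 q; larger indices never occur. *)

definition ifs_ratio :: "real \<Rightarrow> real \<Rightarrow> nat \<Rightarrow> real" where
  "ifs_ratio p q i = (if i = 0 \<or> i = 2 then p else q)"

definition ifs_offset :: "real \<Rightarrow> real \<Rightarrow> nat \<Rightarrow> real" where
  "ifs_offset p q i = (if i = 2 then 1 - p else if i = 3 then 1 - q else 0)"

definition ifs_map :: "real \<Rightarrow> real \<Rightarrow> nat \<Rightarrow> real \<Rightarrow> real" where
  "ifs_map p q i x = ifs_ratio p q i * x + ifs_offset p q i"

definition hutchinson :: "real \<Rightarrow> real \<Rightarrow> real set \<Rightarrow> real set" where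
  "hutchinson p q X = (\<Union>i<4. ifs_map p q i ` X)"

fun word_map :: "real \<Rightarrow> real \<Rightarrow> nat list \<Rightarrow> real \<Rightarrow> real" where
  "word_map p q [] x = x"
| "word_map p q (i # w) x = ifs_map p q i (word_map p q w x)"

lemma hutchinson_eq_union_S:
  "S1 p ` K \<union> S2 q ` K \<union> S3 p ` K \<union> S4 q ` K = hutchinson p q K"
proof -
  have "ifs_map p q 0 = S1 p" "ifs_map p q 1 = S2 q" "ifs_map p q 2 = S3 p" "ifs_map p q 3 = S4 q"
    by (auto simp: ifs_map_def ifs_ratio_def ifs_offset_def S1_def S2_def S3_def S4_def fun_eq_iff)
  moreover have "{..<4::nat} = {0, 1, 2, 3}" by auto
  ultimately show ?thesis unfolding hutchinson_def by auto
qed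

lemma hutchinson_mono: "X \<subseteq> Y \<Longrightarrow> hutchinson p q X \<subseteq> hutchinson p q Y"
  unfolding hutchinson_def by auto

lemma continuous_on_ifs_map: "continuous_on X (ifs_map p q i)"
  unfolding ifs_map_def by (intro continuous_intros)

lemma compact_hutchinson: "compact X \<Longrightarrow> compact (hutchinson p q X)"
  unfolding hutchinson_def by (intro compact_UN compact_continuous_image continuous_on_ifs_map) auto

lemma ifs_map_dist: "\<bar>ifs_map p q i x - ifs_map p q i y\<bar> = \<bar>ifs_ratio p q i\<bar> * \<bar>x - y\<bar>"
  by (simp add: ifs_map_def abs_mult right_diff_distrib[symmetric])

lemma word_map_append: "word_map p q (u @ v) x = word_map p q u (word_map p q v x)"
  by (induction u) auto

lemma word_map_contraction:
  assumes "\<bar>p\<bar> \<le> \<rho>" "\<bar>q\<bar> \<le> \<rho>"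
  shows "\<bar>word_map p q w x - word_map p q w y\<bar> \<le> \<rho> ^ length w * \<bar>x - y\<bar>"
proof (induction w)
  case (Cons i w)
  have "\<bar>ifs_ratio p q i\<bar> \<le> \<rho>" using assms by (simp add: ifs_ratio_def)
  then have "\<bar>ifs_ratio p q i\<bar> * \<bar>word_map p q w x - word_map p q w y\<bar> \<le> \<rho> * (\<rho> ^ length w * \<bar>x - y\<bar>)"
    using Cons by (intro mult_mono) auto
  then show ?case by (simp add: ifs_map_dist mult.assoc)
qed simp

lemma ifs_map_mem_unit_interval:
  assumes "p \<in> {0..1}" "q \<in> {0..1}" "x \<in> {0..1}"
  shows "ifs_map p q i x \<in> {0..1}"
proof -
  have "0 \<le> ifs_ratio p q i * x" "ifs_ratio p q i * x \<le> ifs_ratio p q i"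
    using assms by (auto simp: ifs_ratio_def mult_left_le)
  then show ?thesis
    using assms by (auto simp: ifs_map_def ifs_offset_def ifs_ratio_def)
qed

lemma word_map_mem_unit_interval:
  "p \<in> {0..1} \<Longrightarrow> q \<in> {0..1} \<Longrightarrow> x \<in> {0..1} \<Longrightarrow> word_map p q w x \<in> {0..1}"
  by (induction w) (auto intro!: ifs_map_mem_unit_interval simp del: atLeastAtMost_iff)

lemma word_map_lipschitz_in_q:
  assumes "p \<in> {0..1}" "q1 \<in> {0..1/2}" "q2 \<in> {0..1/2}" "x \<in> {0..1}"
  shows "\<bar>word_map p q1 w x - word_map p q2 w x\<bar> \<le> 2 * \<bar>q1 - q2\<bar>"
proof (induction w)
  case (Cons i w)
  define a1 where "a1 = word_map p q1 w x"
  define a2 where "a2 = word_map p q2 w x"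
  have a: "a1 \<in> {0..1}" "a2 \<in> {0..1}"
    using assms word_map_mem_unit_interval unfolding a1_def a2_def by auto
  have IH: "\<bar>a1 - a2\<bar> \<le> 2 * \<bar>q1 - q2\<bar>" using Cons by (simp add: a1_def a2_def)
  have "\<bar>ifs_map p q1 i a1 - ifs_map p q2 i a2\<bar> \<le> 2 * \<bar>q1 - q2\<bar>"
  proof (cases "i = 0 \<or> i = 2")
    case True
    then have "\<bar>ifs_map p q1 i a1 - ifs_map p q2 i a2\<bar> = p * \<bar>a1 - a2\<bar>"
      using assms by (auto simp: ifs_map_def ifs_ratio_def ifs_offset_def abs_mult right_diff_distrib[symmetric])
    also have "\<dots> \<le> 1 * (2 * \<bar>q1 - q2\<bar>)" using IH assms by (intro mult_mono) auto
    finally show ?thesis by simp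
  next
    case False
    define c where "c = a1 - (if i = 3 then 1 else 0)"
    have e: "ifs_map p q1 i a1 - ifs_map p q2 i a2 = (q1 - q2) * c + q2 * (a1 - a2)"
      using False by (auto simp: c_def ifs_map_def ifs_ratio_def ifs_offset_def algebra_simps)
    have "\<bar>(q1 - q2) * c\<bar> \<le> \<bar>q1 - q2\<bar>"
      using a by (simp add: abs_mult c_def mult_left_le)
    moreover have "\<bar>q2 * (a1 - a2)\<bar> \<le> \<bar>q1 - q2\<bar>"
      using mult_mono[of "\<bar>q2\<bar>" "1/2" "\<bar>a1 - a2\<bar>" "2 * \<bar>q1 - q2\<bar>"] IH assms(3)
      by (simp add: abs_mult)
    ultimately have "\<bar>(q1 - q2) * c + q2 * (a1 - a2)\<bar> \<le> \<bar>q1 - q2\<bar> + \<bar>q1 - q2\<bar>"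
      by (intro order_trans[OF abs_triangle_ineq] add_mono)
    then show ?thesis unfolding e by simp
  qed
  then show ?case by (simp add: a1_def a2_def)
qed simp

section \<open>The attractor\<close>

(* A point of K farthest from L is the image of a point of K, whose distance to L shrinks by the
  contraction factor; so the largest distance vanishes. *)
lemma hutchinson_fixed_point_subset:
  assumes "\<bar>p\<bar> < 1" "\<bar>q\<bar> < 1"
    and K: "compact K" "K \<noteq> {}" "hutchinson p q K = K"
    and L: "compact L" "L \<noteq> {}" "hutchinson p q L = L"
  shows "K \<subseteq> L"
proof -
  define c where "c = max \<bar>p\<bar> \<bar>q\<bar>"
  obtain x where x: "x \<in> K" "\<And>z. z \<in> K \<Longrightarrow> infdist z L \<le> infdist x L"
    using continuous_attains_sup[OF K(1,2) continuous_on_infdist[OF continuous_on_id, of K L]] by auto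
  have "x \<in> hutchinson p q K" using x(1) K(3) by simp
  then obtain i y where i: "i < 4" "y \<in> K" "x = ifs_map p q i y"
    by (auto simp: hutchinson_def)
  obtain y' where y': "y' \<in> L" "infdist y L = dist y y'"
    using infdist_attains_inf[OF compact_imp_closed[OF L(1)] L(2)] by blast
  have "ifs_map p q i y' \<in> L" using y'(1) i(1) L(3) by (auto simp: hutchinson_def)
  then have "infdist x L \<le> \<bar>ifs_map p q i y - ifs_map p q i y'\<bar>"
    using infdist_le i(3) by (fastforce simp: dist_real_def)
  also have "\<dots> \<le> c * infdist y L"
    using y'(2) by (auto simp: ifs_map_dist ifs_ratio_def c_def dist_real_def intro: mult_right_mono)
  also have "\<dots> \<le> c * infdist x L"
    using x(2)[OF i(2)] assms(1,2) by (intro mult_left_mono) (auto simp: c_def)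
  finally have "infdist x L * (1 - c) \<le> 0" by (simp add: algebra_simps)
  moreover have "c < 1" using assms(1,2) by (simp add: c_def)
  ultimately have "infdist x L \<le> 0" by (simp add: mult_le_0_iff)
  then have "infdist z L = 0" if "z \<in> K" for z
    using x(2)[OF that] infdist_nonneg[of z L] by simp
  then show ?thesis
    using in_closed_iff_infdist_zero[OF compact_imp_closed[OF L(1)] L(2)] by blast
qed

locale ifs_parameters =
  fixes p q :: real
  assumes p_pos: "0 < p" and p_less_half: "p < 1/2"
    and q_pos: "0 < q" and q_less_half: "q < 1/2"
begin

(* S1 fixes 0, so the orbit of 0 is invariant, and so is its closure. *)
definition orbit :: "real set" where
  "orbit = {word_map p q w 0 | w. set w \<subseteq> {..<4}}"

lemma hutchinson_orbit: "hutchinson p q orbit = orbit"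
proof
  show "hutchinson p q orbit \<subseteq> orbit"
    unfolding hutchinson_def orbit_def by (force intro: exI[of _ "_ # _"])
  show "orbit \<subseteq> hutchinson p q orbit"
  proof
    fix x assume "x \<in> orbit"
    then obtain w where w: "set w \<subseteq> {..<4}" "x = word_map p q w 0" by (auto simp: orbit_def)
    show "x \<in> hutchinson p q orbit"
    proof (cases w)
      case Nil
      have "x = ifs_map p q 0 (word_map p q [] 0)"
        using w Nil by (simp add: ifs_map_def ifs_offset_def)
      moreover have "word_map p q [] 0 \<in> orbit" by (auto simp: orbit_def intro!: exI[of _ "[]"])
      ultimately show ?thesis by (force simp: hutchinson_def)
    next
      case (Cons i v)
      then show ?thesis using w unfolding hutchinson_def orbit_def by force
    qed
  qed
qed

lemma orbit_subset_unit_interval: "orbit \<subseteq> {0..1}"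
  unfolding orbit_def using word_map_mem_unit_interval[of p q 0] p_pos p_less_half q_pos q_less_half
  by force

lemma closure_orbit_subset_unit_interval: "closure orbit \<subseteq> {0..1}"
  using orbit_subset_unit_interval by (simp add: closure_minimal)

lemma compact_closure_orbit: "compact (closure orbit)"
  using orbit_subset_unit_interval bounded_subset[OF compact_imp_bounded[OF compact_Icc]]
  by simp

lemma hutchinson_closure_orbit: "hutchinson p q (closure orbit) = closure orbit"
proof
  have "ifs_map p q i ` closure orbit \<subseteq> closure (ifs_map p q i ` orbit)" for i
    by (rule continuous_image_closure_subset[OF continuous_on_ifs_map[of UNIV]]) simp
  moreover have "ifs_map p q i ` orbit \<subseteq> orbit" if "i < 4" for i
    using that hutchinson_orbit by (auto simp: hutchinson_def)
  ultimately show "hutchinson p q (closure orbit) \<subseteq> closure orbit"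
    unfolding hutchinson_def by (intro UN_least) (meson closure_mono lessThan_iff order_trans)
  have "closure orbit = closure (hutchinson p q orbit)" by (simp add: hutchinson_orbit)
  also have "\<dots> \<subseteq> hutchinson p q (closure orbit)"
    using compact_imp_closed[OF compact_hutchinson[OF compact_closure_orbit]]
    by (rule closure_minimal[OF hutchinson_mono[OF closure_subset]])
  finally show "closure orbit \<subseteq> hutchinson p q (closure orbit)" .
qed

lemma zero_mem_orbit: "0 \<in> orbit"
  by (auto simp: orbit_def intro!: exI[of _ "[]"])

lemma attractor_eq_closure_orbit: "attractor p q = closure orbit"
  unfolding attractor_def hutchinson_eq_union_S
proof (rule the_equality)
  show "compact (closure orbit) \<and> closure orbit \<noteq> {} \<and> closure orbit = hutchinson p q (closure orbit)"
    using compact_closure_orbit hutchinson_closure_orbit zero_mem_orbit closure_subset by auto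
next
  fix K assume K: "compact K \<and> K \<noteq> {} \<and> K = hutchinson p q K"
  have "\<bar>p\<bar> < 1" "\<bar>q\<bar> < 1" using p_pos p_less_half q_pos q_less_half by auto
  moreover have "closure orbit \<noteq> {}" using zero_mem_orbit closure_subset by auto
  ultimately show "K = closure orbit"
    using hutchinson_fixed_point_subset[of p q] K compact_closure_orbit hutchinson_closure_orbit
    by (metis subset_antisym)
qed

lemma compact_attractor: "compact (attractor p q)"
  unfolding attractor_eq_closure_orbit by (rule compact_closure_orbit)

lemma zero_mem_attractor: "0 \<in> attractor p q"
  using zero_mem_orbit closure_subset by (auto simp: attractor_eq_closure_orbit)

lemma attractor_subset_unit_interval: "attractor p q \<subseteq> {0..1}"
  by (simp add: attractor_eq_closure_orbit closure_orbit_subset_unit_interval)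

lemma hutchinson_attractor: "hutchinson p q (attractor p q) = attractor p q"
  by (simp add: attractor_eq_closure_orbit hutchinson_closure_orbit)

lemma ifs_map_mem_attractor: "i < 4 \<Longrightarrow> x \<in> attractor p q \<Longrightarrow> ifs_map p q i x \<in> attractor p q"
  using hutchinson_attractor by (auto simp: hutchinson_def)

lemma word_map_mem_attractor:
  "set w \<subseteq> {..<4} \<Longrightarrow> x \<in> attractor p q \<Longrightarrow> word_map p q w x \<in> attractor p q"
  by (induction w) (auto intro: ifs_map_mem_attractor)

lemma attractor_word_decomposition:
  assumes "x \<in> attractor p q"
  shows "\<exists>w y. set w \<subseteq> {..<4} \<and> length w = k \<and> y \<in> attractor p q \<and> x = word_map p q w y"
proof (induction k)
  case 0
  show ?case using assms by (intro exI[of _ "[]"]) auto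
next
  case (Suc k)
  then obtain w y where wy: "set w \<subseteq> {..<4}" "length w = k" "y \<in> attractor p q" "x = word_map p q w y"
    by blast
  then have "y \<in> hutchinson p q (attractor p q)" using hutchinson_attractor by simp
  then obtain i z where "i < 4" "z \<in> attractor p q" "y = ifs_map p q i z"
    by (auto simp: hutchinson_def)
  then show ?case using wy by (intro exI[of _ "w @ [i]"] exI[of _ z]) (auto simp: word_map_append)
qed

lemma attractor_near_word_image:
  assumes "x \<in> attractor p q" "max p q \<le> \<rho>"
  shows "\<exists>w. set w \<subseteq> {..<4} \<and> length w = k \<and> \<bar>x - word_map p q w 0\<bar> \<le> \<rho> ^ k"
proof -
  obtain w y where w: "set w \<subseteq> {..<4}" "length w = k" "y \<in> attractor p q"
    "x = word_map p q w y"
    using attractor_word_decomposition[OF assms(1)] by blast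
  then have "y \<in> {0..1}" using attractor_subset_unit_interval by auto
  have "\<bar>x - word_map p q w 0\<bar> \<le> \<rho> ^ k * \<bar>y - 0\<bar>"
    using w word_map_contraction[of p \<rho> q w y 0] assms(2) p_pos q_pos by simp
  also have "\<dots> \<le> \<rho> ^ k"
    using \<open>y \<in> {0..1}\<close> assms(2) p_pos by (simp add: mult_left_le)
  finally show ?thesis using w by blast
qed

lemma A_set_eq: "A_set p q = attractor p q \<inter> {1/2..}"
proof
  have "ifs_map p q 2 = S3 p" "ifs_map p q 3 = S4 q"
    by (auto simp: ifs_map_def ifs_ratio_def ifs_offset_def S3_def S4_def fun_eq_iff)
  moreover have "S3 p x \<ge> 1/2" "S4 q x \<ge> 1/2" if "x \<in> attractor p q" for x
  proof -
    have "0 \<le> x" using that attractor_subset_unit_interval by auto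
    then have "0 \<le> p * x" "0 \<le> q * x" using p_pos q_pos by auto
    then show "S3 p x \<ge> 1/2" "S4 q x \<ge> 1/2"
      using p_less_half q_less_half by (auto simp: S3_def S4_def)
  qed
  ultimately show "A_set p q \<subseteq> attractor p q \<inter> {1/2..}"
    unfolding A_set_def using ifs_map_mem_attractor[of 2] ifs_map_mem_attractor[of 3] by fastforce
next
  show "attractor p q \<inter> {1/2..} \<subseteq> A_set p q"
  proof
    fix x assume x: "x \<in> attractor p q \<inter> {1/2..}"
    then have "x \<in> hutchinson p q (attractor p q)" using hutchinson_attractor by simp
    then obtain i y where i: "i < 4" "y \<in> attractor p q" "x = ifs_map p q i y"
      by (auto simp: hutchinson_def)
    have y: "0 \<le> y" "y \<le> 1" using i(2) attractor_subset_unit_interval by auto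
    have "i = 2 \<or> i = 3"
    proof (rule ccontr)
      assume "\<not> ?thesis"
      then have "x = ifs_ratio p q i * y" using i by (auto simp: ifs_map_def ifs_offset_def)
      also have "\<dots> \<le> ifs_ratio p q i"
        using y p_pos q_pos by (simp add: ifs_ratio_def mult_left_le)
      also have "\<dots> < 1/2" using p_less_half q_less_half by (simp add: ifs_ratio_def)
      finally show False using x by auto
    qed
    then show "x \<in> A_set p q" using i
      by (auto simp: A_set_def ifs_map_def ifs_ratio_def ifs_offset_def S3_def S4_def)
  qed
qed

lemma A_set_subset: "A_set p q \<subseteq> {1 - max p q..1}"
proof
  fix a assume "a \<in> A_set p q"
  then obtain x where x: "x \<in> attractor p q" "a = S3 p x \<or> a = S4 q x"
    by (auto simp: A_set_def)
  then have "0 \<le> x" "x \<le> 1" using attractor_subset_unit_interval by auto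
  then have "0 \<le> p * x" "0 \<le> q * x" "p * x \<le> p" "q * x \<le> q"
    using p_pos q_pos by (auto simp: mult_left_le)
  then show "a \<in> {1 - max p q..1}" using x(2) by (auto simp: S3_def S4_def)
qed

end

section \<open>Continuous dependence on q\<close>

lemma attractor_infdist_le:
  assumes "ifs_parameters p q" "ifs_parameters p q'" and x: "x \<in> attractor p q'"
  shows "infdist x (attractor p q) \<le> 2 * \<bar>q' - q\<bar>"
proof (rule LIMSEQ_le_const)
  interpret K: ifs_parameters p q by fact
  interpret K': ifs_parameters p q' by fact
  show "(\<lambda>k. (1/2) ^ k + 2 * \<bar>q' - q\<bar>) \<longlonglongrightarrow> 2 * \<bar>q' - q\<bar>"
    by (auto intro!: tendsto_eq_intros LIMSEQ_power_zero)
  have "infdist x (attractor p q) \<le> (1/2) ^ k + 2 * \<bar>q' - q\<bar>" for k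
  proof -
    have "max p q' \<le> 1/2" using K.p_less_half K'.q_less_half by simp
    then obtain w where w: "set w \<subseteq> {..<4}" "\<bar>x - word_map p q' w 0\<bar> \<le> (1/2) ^ k"
      using K'.attractor_near_word_image[OF x] by blast
    have "word_map p q w 0 \<in> attractor p q"
      using K.word_map_mem_attractor[OF w(1) K.zero_mem_attractor] .
    then have "infdist x (attractor p q) \<le> \<bar>x - word_map p q w 0\<bar>"
      by (metis dist_real_def infdist_le)
    also have "\<dots> \<le> \<bar>x - word_map p q' w 0\<bar> + \<bar>word_map p q' w 0 - word_map p q w 0\<bar>"
      by linarith
    also have "\<dots> \<le> (1/2) ^ k + 2 * \<bar>q' - q\<bar>"
      using w(2) word_map_lipschitz_in_q[of p q' q 0 w] K.p_pos K.p_less_half K.q_pos K.q_less_half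
        K'.q_pos K'.q_less_half by simp
    finally show ?thesis .
  qed
  then show "\<exists>N. \<forall>k\<ge>N. infdist x (attractor p q) \<le> (1/2) ^ k + 2 * \<bar>q' - q\<bar>" by blast
qed

lemma mem_attractor_limit:
  assumes "ifs_parameters p q" "\<And>j. ifs_parameters p (qs j)" "qs \<longlonglongrightarrow> q"
    and "\<And>j. xs j \<in> attractor p (qs j)" "xs \<longlonglongrightarrow> x"
  shows "x \<in> attractor p q"
proof -
  interpret ifs_parameters p q by fact
  have "infdist x (attractor p q) \<le> 0"
  proof (rule LIMSEQ_le)
    show "(\<lambda>j. infdist (xs j) (attractor p q)) \<longlonglongrightarrow> infdist x (attractor p q)"
      using assms(5) by (rule tendsto_infdist)
    show "(\<lambda>j. 2 * \<bar>qs j - q\<bar>) \<longlonglongrightarrow> 0"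
      using assms(3) by (auto intro!: tendsto_eq_intros)
    show "\<exists>N. \<forall>j\<ge>N. infdist (xs j) (attractor p q) \<le> 2 * \<bar>qs j - q\<bar>"
      using attractor_infdist_le[OF assms(1,2,4)] by blast
  qed
  then have "infdist x (attractor p q) = 0" by (intro antisym infdist_nonneg)
  then show ?thesis
    using in_closed_iff_infdist_zero[OF compact_imp_closed[OF compact_attractor]] zero_mem_attractor
    by blast
qed

lemma mem_A_set_limit:
  assumes "ifs_parameters p q" "\<And>j. ifs_parameters p (qs j)" "qs \<longlonglongrightarrow> q"
    and "\<And>j. xs j \<in> A_set p (qs j)" "xs \<longlonglongrightarrow> x"
  shows "x \<in> A_set p q"
proof -
  have "xs j \<in> attractor p (qs j)" "1/2 \<le> xs j" for j
    using assms(4) ifs_parameters.A_set_eq[OF assms(2)] by auto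
  then have "x \<in> attractor p q" "1/2 \<le> x"
    using mem_attractor_limit[OF assms(1-3)] assms(5) LIMSEQ_le_const[OF assms(5), of "1/2"] by auto
  then show ?thesis using ifs_parameters.A_set_eq[OF assms(1)] by auto
qed

section \<open>Delta is closed\<close>

lemma funpow_S1: "(S1 p ^^ m) x = p ^ m * x"
  by (induction m) (auto simp: S1_def)

lemma funpow_S2: "(S2 q ^^ n) x = q ^ n * x"
  by (induction n) (auto simp: S2_def)

lemma mem_Delta_iff:
  "q \<in> Delta m n p \<longleftrightarrow>
     q \<in> {0<..<1/16} \<and> (\<exists>a\<in>A_set p q. \<exists>b\<in>A_set p q. p ^ m * a = q ^ n * b)"
  unfolding Delta_def funpow_S1 funpow_S2 by blast

lemma mem_Delta_iff_div:
  "q \<in> Delta m n p \<longleftrightarrow> q \<in> {0<..<1/16} \<and> (\<exists>a\<in>A_set p q. p ^ m * a / q ^ n \<in> A_set p q)"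
proof -
  have "p ^ m * a = q ^ n * b \<longleftrightarrow> b = p ^ m * a / q ^ n" if "q \<noteq> 0" for a b
    using that by (auto simp: field_simps)
  then show ?thesis unfolding mem_Delta_iff by auto
qed

lemma ifs_parameters_small:
  "0 < p \<Longrightarrow> p < 1/16 \<Longrightarrow> q \<in> {0<..<1/16} \<Longrightarrow> ifs_parameters p q"
  by unfold_locales auto

lemma closedin_Delta:
  assumes p: "0 < p" "p < 1/16"
  shows "closedin (top_of_set {0<..<1/16}) (Delta m n p)"
  unfolding closedin_limpt
proof (intro conjI allI impI)
  show "Delta m n p \<subseteq> {0<..<1/16}" by (auto simp: Delta_def)
  fix x :: real assume "x islimpt Delta m n p \<and> x \<in> {0<..<1/16}"
  then obtain qs where qs: "\<And>j. qs j \<in> Delta m n p" "qs \<longlonglongrightarrow> x" and x: "x \<in> {0<..<1/16}"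
    unfolding islimpt_sequential by auto
  obtain a where a: "\<And>j. a j \<in> A_set p (qs j)" "\<And>j. p ^ m * a j / qs j ^ n \<in> A_set p (qs j)"
    using qs(1) unfolding mem_Delta_iff_div by metis
  have params: "ifs_parameters p (qs j)" for j
    using qs(1) p by (auto simp: Delta_def intro: ifs_parameters_small)
  have "a j \<in> {0..1}" for j
    using a(1)[of j] ifs_parameters.A_set_eq[OF params]
      ifs_parameters.attractor_subset_unit_interval[OF params] by blast
  then obtain r a0 where r: "strict_mono r" "(a \<circ> r) \<longlonglongrightarrow> a0"
    using compact_Icc[of 0 1] unfolding compact_eq_seq_compact_metric seq_compact_def by metis
  have x_params: "ifs_parameters p x" using p x by (rule ifs_parameters_small)
  have qs_r: "(qs \<circ> r) \<longlonglongrightarrow> x" using LIMSEQ_subseq_LIMSEQ[OF qs(2) r(1)] .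
  have params_r: "ifs_parameters p ((qs \<circ> r) j)" for j by (simp add: params)
  have "a0 \<in> A_set p x"
    using mem_A_set_limit[OF x_params params_r qs_r, of "a \<circ> r"] a(1) r(2) by auto
  moreover have "p ^ m * a0 / x ^ n \<in> A_set p x"
  proof (rule mem_A_set_limit[OF x_params params_r qs_r])
    show "(\<lambda>j. p ^ m * (a \<circ> r) j / (qs \<circ> r) j ^ n) \<longlonglongrightarrow> p ^ m * a0 / x ^ n"
      using r(2) qs_r x unfolding comp_def by (intro tendsto_intros) auto
  qed (use a(2) in auto)
  ultimately show "x \<in> Delta m n p" using x unfolding mem_Delta_iff_div by blast
qed

section \<open>Delta is nowhere dense\<close>

lemma power_Suc_diff_ge:
  fixes a b :: real
  assumes "0 \<le> a" "a \<le> b"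
  shows "a ^ n * (b - a) \<le> b ^ Suc n - a ^ Suc n"
proof -
  have "b * a ^ n \<le> b * b ^ n" using assms by (intro mult_left_mono power_mono) auto
  then show ?thesis by (simp add: algebra_simps)
qed

(* Level-k version of the condition defining Delta: the points of A are replaced by images of 0
  under words w, w' of length k, and the equation holds up to the error eps. *)
definition approx_intersection ::
    "real \<Rightarrow> nat \<Rightarrow> nat \<Rightarrow> real \<Rightarrow> nat list \<Rightarrow> nat list \<Rightarrow> real \<Rightarrow> bool" where
  "approx_intersection p m n \<epsilon> w w' q \<longleftrightarrow>
     p ^ m \<le> 2 * q ^ n \<and> 7/8 \<le> word_map p q w' 0 \<and>
     \<bar>p ^ m * word_map p q w 0 - q ^ n * word_map p q w' 0\<bar> \<le> \<epsilon>"

lemma Delta_approx_intersection: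
  assumes p: "0 < p" "p \<le> \<rho>" and q: "q \<in> Delta m n p" "q \<le> \<rho>" and "\<rho> < 1/16" "1 \<le> k"
  shows "\<exists>w w'. set w \<subseteq> {..<4} \<and> length w = k \<and> set w' \<subseteq> {..<4} \<and> length w' = k \<and>
           approx_intersection p m n (2 * \<rho> ^ k) w w' q"
proof -
  have q01: "q \<in> {0<..<1/16}" using q(1) by (auto simp: Delta_def)
  interpret ifs_parameters p q
    using p q01 assms(5) by (intro ifs_parameters_small) auto
  obtain a b where ab: "a \<in> A_set p q" "b \<in> A_set p q" "p ^ m * a = q ^ n * b"
    using q(1) by (auto simp: mem_Delta_iff)
  have "1 - max p q \<ge> 15/16" using p q assms(5) by auto
  then have a01: "15/16 \<le> a" "a \<le> 1" and b01: "15/16 \<le> b" "b \<le> 1"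
    using ab(1,2) A_set_subset by fastforce+
  have \<rho>k: "\<rho> ^ k \<le> 1/16"
    using p assms(5,6) power_decreasing[of 1 k \<rho>] by auto
  have "max p q \<le> \<rho>" using p q by simp
  then obtain w w' where w: "set w \<subseteq> {..<4}" "length w = k" "\<bar>a - word_map p q w 0\<bar> \<le> \<rho> ^ k"
    and w': "set w' \<subseteq> {..<4}" "length w' = k" "\<bar>b - word_map p q w' 0\<bar> \<le> \<rho> ^ k"
    using attractor_near_word_image ab(1,2) A_set_eq by (metis Int_iff)
  have pm: "0 \<le> p ^ m" "p ^ m \<le> 1" using p_pos p_less_half by (auto intro: power_le_one)
  have qn: "0 \<le> q ^ n" "q ^ n \<le> 1" using q_pos q_less_half by (auto intro: power_le_one)
  have "p ^ m * (15/16) \<le> q ^ n * 1"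
    using ab(3) mult_left_mono[OF a01(1) pm(1)] mult_left_mono[OF b01(2) qn(1)] by linarith
  then have "p ^ m \<le> 2 * q ^ n" using pm by linarith
  moreover have "7/8 \<le> word_map p q w' 0" using w'(3) b01 \<rho>k by linarith
  moreover have "\<bar>p ^ m * word_map p q w 0 - q ^ n * word_map p q w' 0\<bar> \<le> 2 * \<rho> ^ k"
  proof -
    have "p ^ m * word_map p q w 0 - q ^ n * word_map p q w' 0
        = q ^ n * (b - word_map p q w' 0) - p ^ m * (a - word_map p q w 0)"
      using ab(3) by (simp add: algebra_simps)
    moreover have "\<bar>p ^ m * (a - word_map p q w 0)\<bar> \<le> 1 * \<rho> ^ k"
      unfolding abs_mult using pm w(3) by (intro mult_mono) auto
    moreover have "\<bar>q ^ n * (b - word_map p q w' 0)\<bar> \<le> 1 * \<rho> ^ k"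
      unfolding abs_mult using qn w'(3) by (intro mult_mono) auto
    ultimately show ?thesis by (simp add: abs_diff_le_iff abs_le_iff)
  qed
  ultimately show ?thesis using w w' unfolding approx_intersection_def by blast
qed

(* Subtracting the approximate equations at q1 and q2, the increase of q^(n+1) times a value
  at least 7/8 must be absorbed by the errors and by the 2-Lipschitz variation of the words. *)
lemma approx_intersection_diameter:
  assumes p: "0 \<le> p" "p \<le> 1" and q: "0 \<le> q1" "q1 \<le> q2" "q2 < 1/16"
    and approx1: "approx_intersection p m (Suc n) \<epsilon> w w' q1"
    and approx2: "approx_intersection p m (Suc n) \<epsilon> w w' q2"
  shows "q1 ^ n * (q2 - q1) \<le> 4 * \<epsilon>"
proof -
  define c1 where "c1 = word_map p q1 w 0"
  define c2 where "c2 = word_map p q2 w 0"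
  define d1 where "d1 = word_map p q1 w' 0"
  define d2 where "d2 = word_map p q2 w' 0"
  define Q1 where "Q1 = q1 ^ Suc n"
  define Q2 where "Q2 = q2 ^ Suc n"
  define s where "s = q1 ^ n"
  define \<Delta> where "\<Delta> = q2 - q1"
  have "0 \<le> s" "0 \<le> \<Delta>" "0 \<le> p ^ m" "0 \<le> Q1" using p q by (auto simp: s_def \<Delta>_def Q1_def)
  have lip: "\<bar>c1 - c2\<bar> \<le> 2 * \<Delta>" "\<bar>d1 - d2\<bar> \<le> 2 * \<Delta>"
    using word_map_lipschitz_in_q[of p q1 q2 0] p q
    unfolding c1_def c2_def d1_def d2_def \<Delta>_def by auto
  have approx: "p ^ m \<le> 2 * Q1" "7/8 \<le> d2"
    "\<bar>p ^ m * c1 - Q1 * d1\<bar> \<le> \<epsilon>" "\<bar>p ^ m * c2 - Q2 * d2\<bar> \<le> \<epsilon>"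
    using approx1 approx2
    unfolding approx_intersection_def c1_def c2_def d1_def d2_def Q1_def Q2_def by auto
  have "s * \<Delta> \<le> Q2 - Q1"
    using power_Suc_diff_ge[OF q(1,2)] unfolding s_def \<Delta>_def Q1_def Q2_def .
  then have "s * \<Delta> * (7/8) \<le> (Q2 - Q1) * d2"
    using approx(2) mult_nonneg_nonneg[OF \<open>0 \<le> s\<close> \<open>0 \<le> \<Delta>\<close>]
    by (intro mult_mono) linarith+
  moreover have "Q1 * \<Delta> \<le> s * \<Delta> / 16"
  proof -
    have "q1 * (s * \<Delta>) \<le> 1/16 * (s * \<Delta>)"
      using q \<open>0 \<le> s\<close> \<open>0 \<le> \<Delta>\<close> by (intro mult_right_mono) auto
    then show ?thesis by (simp add: Q1_def s_def mult.assoc)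
  qed
  moreover have "\<bar>p ^ m * (c1 - c2)\<bar> \<le> (2 * Q1) * (2 * \<Delta>)"
    unfolding abs_mult using approx(1) lip(1) \<open>0 \<le> p ^ m\<close> by (intro mult_mono) auto
  moreover have "\<bar>Q1 * (d2 - d1)\<bar> \<le> Q1 * (2 * \<Delta>)"
    using mult_left_mono[OF lip(2) \<open>0 \<le> Q1\<close>] \<open>0 \<le> Q1\<close> by (simp add: abs_mult abs_minus_commute)
  moreover have "(Q2 - Q1) * d2 = (p ^ m * c1 - Q1 * d1) - (p ^ m * c2 - Q2 * d2)
      - p ^ m * (c1 - c2) - Q1 * (d2 - d1)"
    by (simp add: algebra_simps)
  ultimately have "s * \<Delta> \<le> 4 * \<epsilon>"
    using approx(3,4) by (simp add: abs_le_iff algebra_simps)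
  then show ?thesis by (simp add: s_def \<Delta>_def)
qed

lemma interval_length_le_card_mult_diameter:
  fixes \<alpha> \<beta> d :: real
  assumes "finite I" "\<alpha> \<le> \<beta>"
    and cover: "\<And>q. q \<in> {\<alpha>..\<beta>} \<Longrightarrow> \<exists>i\<in>I. P i q"
    and diameter: "\<And>i q1 q2. i \<in> I \<Longrightarrow> q1 \<in> {\<alpha>..\<beta>} \<Longrightarrow> q2 \<in> {\<alpha>..\<beta>} \<Longrightarrow>
      P i q1 \<Longrightarrow> P i q2 \<Longrightarrow> q1 \<le> q2 \<Longrightarrow> q2 - q1 \<le> d"
  shows "\<beta> - \<alpha> \<le> card I * d"
proof -
  define N where "N = card I"
  have "\<alpha> \<in> {\<alpha>..\<beta>}" using assms(2) by simp
  then obtain i0 where "i0 \<in> I" "P i0 \<alpha>" using cover by blast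
  then have "0 < N" "0 \<le> d"
    using assms(1) diameter[of i0 \<alpha> \<alpha>] \<open>\<alpha> \<in> {\<alpha>..\<beta>}\<close> by (auto simp: N_def card_gt_0_iff)
  define h where "h = (\<beta> - \<alpha>) / N"
  define t where "t j = \<alpha> + real j * h" for j
  have "0 \<le> h" "N * h = \<beta> - \<alpha>" using \<open>0 < N\<close> assms(2) by (auto simp: h_def)
  have t: "t j \<in> {\<alpha>..\<beta>}" if "j \<le> N" for j
  proof -
    have "j * h \<le> N * h" using that \<open>0 \<le> h\<close> by (intro mult_right_mono) auto
    then show ?thesis using \<open>0 \<le> h\<close> \<open>N * h = \<beta> - \<alpha>\<close> by (auto simp: t_def)
  qed
  obtain f where f: "\<And>j. j \<le> N \<Longrightarrow> f j \<in> I \<and> P (f j) (t j)"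
    using cover[OF t] by metis
  have "\<not> inj_on f {0..N}"
  proof
    assume "inj_on f {0..N}"
    moreover have "f ` {0..N} \<subseteq> I" using f by auto
    ultimately have "card {0..N} \<le> N" unfolding N_def using assms(1) by (rule card_inj_on_le)
    then show False by simp
  qed
  then obtain i j where ij: "i < j" "j \<le> N" "f i = f j"
  proof -
    obtain i j where "i \<le> N" "j \<le> N" "i \<noteq> j" "f i = f j"
      using \<open>\<not> inj_on f {0..N}\<close> unfolding inj_on_def by auto
    then show ?thesis using that[of i j] that[of j i] by (cases "i < j") auto
  qed
  have "h \<le> t j - t i"
  proof -
    have "1 \<le> real j - real i" using ij by linarith
    then show ?thesis
      using mult_right_mono[of 1 "real j - real i" h] \<open>0 \<le> h\<close> by (simp add: t_def algebra_simps)
  qed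
  also have "\<dots> \<le> d"
  proof (rule diameter)
    show "t i \<le> t j" using ij \<open>0 \<le> h\<close> by (simp add: t_def mult_right_mono)
  qed (use f[of i] f[of j] t[of i] t[of j] ij in auto)
  finally have "N * h \<le> N * d" by (simp add: mult_left_mono)
  then show ?thesis using \<open>N * h = \<beta> - \<alpha>\<close> by (simp add: N_def)
qed

lemma Delta_contains_no_interval:
  assumes p: "0 < p" "p < 1/16" and "\<alpha> < \<beta>"
  shows "\<not> {\<alpha>..\<beta>} \<subseteq> Delta m (Suc n) p"
proof
  assume sub: "{\<alpha>..\<beta>} \<subseteq> Delta m (Suc n) p"
  then have "\<alpha> \<in> Delta m (Suc n) p" "\<beta> \<in> Delta m (Suc n) p" using \<open>\<alpha> < \<beta>\<close> by auto
  then have \<alpha>\<beta>: "0 < \<alpha>" "\<beta> < 1/16" by (auto simp: Delta_def)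
  define \<rho> where "\<rho> = max p \<beta>"
  have \<rho>: "0 < \<rho>" "\<rho> < 1/16" using p \<alpha>\<beta> \<open>\<alpha> < \<beta>\<close> by (auto simp: \<rho>_def)
  have "(\<lambda>k. 8 * (16 * \<rho>) ^ k) \<longlonglongrightarrow> 8 * 0"
    using \<rho> by (intro tendsto_mult tendsto_const LIMSEQ_power_zero) auto
  moreover have "0 < \<alpha> ^ n * (\<beta> - \<alpha>)" using \<alpha>\<beta> \<open>\<alpha> < \<beta>\<close> by simp
  ultimately have "\<forall>\<^sub>F k in sequentially. 1 \<le> k \<and> 8 * (16 * \<rho>) ^ k < \<alpha> ^ n * (\<beta> - \<alpha>)"
    by (simp only: mult_zero_right, intro eventually_conj eventually_ge_at_top order_tendstoD(2))
  then obtain k where k: "1 \<le> k" "8 * (16 * \<rho>) ^ k < \<alpha> ^ n * (\<beta> - \<alpha>)"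
    using eventually_happens'[OF sequentially_bot] by blast
  define W where "W = {w. set w \<subseteq> {..<4::nat} \<and> length w = k}"
  have "finite W" unfolding W_def by (rule finite_lists_length_eq) simp
  have "card (W \<times> W) = 16 ^ k"
    using card_lists_length_eq[of "{..<4::nat}" k]
    by (simp add: W_def card_cartesian_product flip: power_mult_distrib)
  have "\<beta> - \<alpha> \<le> card (W \<times> W) * (8 * \<rho> ^ k / \<alpha> ^ n)"
  proof (rule interval_length_le_card_mult_diameter[where P = "\<lambda>(w, w').
      approx_intersection p m (Suc n) (2 * \<rho> ^ k) w w'"])
    fix q assume q: "q \<in> {\<alpha>..\<beta>}"
    then have "q \<in> Delta m (Suc n) p" "p \<le> \<rho>" "q \<le> \<rho>" using sub by (auto simp: \<rho>_def)
    then show "\<exists>ww\<in>W \<times> W. (\<lambda>(w, w'). approx_intersection p m (Suc n) (2 * \<rho> ^ k) w w') ww q"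
      using Delta_approx_intersection[OF p(1) _ _ _ \<rho>(2) k(1)] by (fastforce simp: W_def)
  next
    fix ww q1 q2
    assume q: "q1 \<in> {\<alpha>..\<beta>}" "q2 \<in> {\<alpha>..\<beta>}" "q1 \<le> q2"
      and "(\<lambda>(w, w'). approx_intersection p m (Suc n) (2 * \<rho> ^ k) w w') ww q1"
        "(\<lambda>(w, w'). approx_intersection p m (Suc n) (2 * \<rho> ^ k) w w') ww q2"
    then have "q1 ^ n * (q2 - q1) \<le> 4 * (2 * \<rho> ^ k)"
      using approx_intersection_diameter[of p q1 q2 m n "2 * \<rho> ^ k" "fst ww" "snd ww"] p \<alpha>\<beta>
      by (auto simp: case_prod_beta)
    moreover have "\<alpha> ^ n * (q2 - q1) \<le> q1 ^ n * (q2 - q1)"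
      using q \<alpha>\<beta> by (intro mult_right_mono power_mono) auto
    ultimately show "q2 - q1 \<le> 8 * \<rho> ^ k / \<alpha> ^ n"
      using \<alpha>\<beta> by (simp add: field_simps)
  qed (use \<open>finite W\<close> \<open>\<alpha> < \<beta>\<close> in auto)
  also have "\<dots> = 8 * (16 * \<rho>) ^ k / \<alpha> ^ n"
    by (simp add: \<open>card (W \<times> W) = 16 ^ k\<close> power_mult_distrib)
  finally show False using k(2) \<alpha>\<beta> by (simp add: field_simps)
qed

lemma interior_Delta_empty:
  assumes "0 < p" "p < 1/16"
  shows "interior (Delta m (Suc n) p) = {}"
proof -
  have "x \<notin> interior (Delta m (Suc n) p)" for x
  proof
    assume "x \<in> interior (Delta m (Suc n) p)"
    then obtain e where "0 < e" "cball x e \<subseteq> Delta m (Suc n) p"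
      by (auto simp: mem_interior_cball)
    then show False
      using Delta_contains_no_interval[OF assms, of "x - e" "x + e"] by (simp add: cball_eq_atLeastAtMost)
  qed
  then show ?thesis by blast
qed

theorem theorem17:
  fixes p :: real and m n :: nat
  assumes "0 < p" "p < 1/16" and "m \<ge> 1" "n \<ge> 1"
  shows "closedin (top_of_set {0<..<1/16}) (Delta m n p) \<and>
         (top_of_set {0<..<1/16}) interior_of
           ((top_of_set {0<..<1/16}) closure_of (Delta m n p)) = {}"
proof
  show closed: "closedin (top_of_set {0<..<1/16}) (Delta m n p)"
    using assms(1,2) by (rule closedin_Delta)
  obtain n' where "n = Suc n'" using assms(4) by (cases n) auto
  then have "interior (Delta m n p) = {}" using assms(1,2) by (simp add: interior_Delta_empty)
  then show "(top_of_set {0<..<1/16}) interior_of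
      ((top_of_set {0<..<1/16}) closure_of (Delta m n p)) = {}"
    by (simp add: closure_of_closedin[OF closed] interior_of_subtopology_open)
qed

end
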